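(* Let $r\ge2$ be an integer, $f\in C_p(\mathbb{R})$ and $c>0$. Assume that for every $n\in\mathbb{N}_0$, $$H_tf(x)=\min_{k\in\{0,1,\dots,r^n\}}q_f\Big(t,x;\frac{k}{r^n}\Big)\quad\text{for all }(t,x)\in\Big[\frac{1}{2cr^n},\infty\Big)\times[0,1].$$ Then there exists a dense subset of $[0,1]$ such that $f$ is not differentiable at any point of this subset.
   Context: $C_p(\mathbb{R})$ denotes the set of all continuous functions $f:\mathbb{R}\to\mathbb{R}$ periodic with period $1$ with $f(0)=0$; $\mathbb{N}_0=\mathbb{N}\cup\{0\}$. For such $f$, $q_f(t,x;z)=f(z)+\frac{1}{2t}(x-z)^2$ and $H_tf(x)=\inf_{z\in\mathbb{R}}q_f(t,x;z)$ for $t>0$, $x\in\mathbb{R}$. *)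

theory Defs
  imports "HOL-Analysis.Analysis"
begin

definition Cp :: "(real \<Rightarrow> real) set" where
  "Cp = {f. continuous_on UNIV f \<and> (\<forall>x. f (x + 1) = f x) \<and> f 0 = 0}"

definition qf :: "(real \<Rightarrow> real) \<Rightarrow> real \<Rightarrow> real \<Rightarrow> real \<Rightarrow> real" where
  "qf f t x z = f z + (x - z)^2 / (2 * t)"

definition Ht :: "real \<Rightarrow> (real \<Rightarrow> real) \<Rightarrow> real \<Rightarrow> real" where
  "Ht t f x = (INF z. qf f t x z)"

end

(* For small t = 1/(2 c r^n), every x in [0,1] has a minimiser of z \<mapsto> q_f(t,x;z) on the finite
   grid {k/r^n}, so infinitely many x near a given point share one grid minimiser g. Fermat's rule
   at g would give f'(g) = (x - g)/t for two different x, hence f is not differentiable at g.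
   Boundedness of f keeps a minimiser within 2 sqrt(t sup|f|) of x, which makes these g dense. *)

theory Submission
  imports Defs "HOL-Library.Periodic_Fun"
begin

lemma periodic_continuous_bounded:
  fixes f :: "real \<Rightarrow> real"
  assumes "continuous_on UNIV f" and "\<And>x. f (x + 1) = f x"
  shows "\<exists>M. \<forall>z. \<bar>f z\<bar> \<le> M"
proof -
  interpret periodic_fun_simple' f by standard (fact assms(2))
  have "compact (f ` {0..1})"
    by (intro compact_continuous_image continuous_on_subset[OF assms(1)]) auto
  then obtain M where M: "\<forall>y \<in> f ` {0..1}. \<bar>y\<bar> \<le> M"
    by (meson compact_imp_bounded bounded_real)
  have "f z = f (frac z)" for z
    using minus_of_int[of z "\<lfloor>z\<rfloor>"] by (simp add: frac_def)
  moreover have "frac z \<in> {0..1}" for z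
    using frac_lt_1[of z] by simp
  ultimately show ?thesis
    using M by (metis image_eqI)
qed

lemma Ht_le_qf:
  assumes "t > 0" and "bdd_below (range f)"
  shows "Ht t f x \<le> qf f t x z"
proof -
  obtain m where m: "\<And>w. m \<le> f w"
    using assms(2) by (auto simp: bdd_below_def)
  have "m \<le> qf f t x w" for w
    using m[of w] assms(1) by (simp add: qf_def add_increasing2)
  then have "bdd_below (range (qf f t x))"
    by (rule bdd_belowI2)
  then show ?thesis
    unfolding Ht_def by (rule cINF_lower) simp
qed

lemma not_differentiable_at_common_minimizer:
  assumes "t > 0" and "x1 \<noteq> x2"
    and "\<And>z. qf f t x1 g \<le> qf f t x1 z" and "\<And>z. qf f t x2 g \<le> qf f t x2 z"
  shows "\<not> f differentiable (at g)"
proof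
  assume "f differentiable (at g)"
  then obtain D where D: "(f has_real_derivative D) (at g)"
    using real_differentiable_def by blast
  have "((\<lambda>z. qf f t x z) has_real_derivative (D - (x - g) / t)) (at g)" for x
    unfolding qf_def using assms(1) by (auto intro!: derivative_eq_intros D simp: field_simps)
  \<comment> \<open>Fermat's rule at the interior minimum \<open>g\<close> pins \<open>x\<close> down as \<open>g + t f'(g)\<close>.\<close>
  then have "D - (x1 - g) / t = 0" and "D - (x2 - g) / t = 0"
    using assms(3,4) by (blast intro: DERIV_local_min[OF _ zero_less_one])+
  then show False
    using assms(1,2) by (simp add: field_simps)
qed

lemma qf_minimizer_close:
  assumes "t > 0" and "\<delta> > 0" and "t \<le> \<delta>\<^sup>2 / (4 * (M + 1))"
    and "\<And>z. \<bar>f z\<bar> \<le> M" and "qf f t x g \<le> qf f t x x"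
  shows "\<bar>x - g\<bar> < \<delta>"
proof -
  have "M \<ge> 0"
    using assms(4)[of 0] by linarith
  have "(x - g)\<^sup>2 / (2 * t) \<le> f x - f g"
    using assms(5) by (simp add: qf_def)
  also have "\<dots> \<le> 2 * M"
    using assms(4)[of x] assms(4)[of g] by linarith
  finally have "(x - g)\<^sup>2 \<le> 4 * t * M"
    using assms(1) by (simp add: field_simps)
  also have "\<dots> < 4 * t * (M + 1)"
    using assms(1) by simp
  also have "\<dots> \<le> \<delta>\<^sup>2"
    using assms(3) \<open>M \<ge> 0\<close> by (simp add: field_simps)
  finally have "\<bar>x - g\<bar>\<^sup>2 < \<delta>\<^sup>2"
    by simp
  then show ?thesis
    by (rule power_less_imp_less_base) (use assms(2) in simp)
qed

lemma common_grid_minimizer: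
  assumes "finite G" and "G \<noteq> {}" and "infinite A"
    and "\<And>x. x \<in> A \<Longrightarrow> Ht t f x = (MIN g\<in>G. qf f t x g)"
  obtains x1 x2 g where "x1 \<in> A" "x2 \<in> A" "x1 \<noteq> x2" "g \<in> G"
    "Ht t f x1 = qf f t x1 g" "Ht t f x2 = qf f t x2 g"
proof -
  have "\<forall>x\<in>A. \<exists>g\<in>G. Ht t f x = qf f t x g"
    using assms(1,2,4) by (metis (no_types, lifting) Min_in finite_imageI image_iff image_is_empty)
  then obtain m where m: "\<And>x. x \<in> A \<Longrightarrow> m x \<in> G \<and> Ht t f x = qf f t x (m x)"
    by metis
  have "\<not> inj_on m A"
  proof
    assume "inj_on m A"
    moreover have "finite (m ` A)"
      using m by (intro finite_subset[OF _ assms(1)]) auto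
    ultimately show False
      using assms(3) finite_imageD by blast
  qed
  then obtain x1 x2 where "x1 \<in> A" "x2 \<in> A" "x1 \<noteq> x2" "m x1 = m x2"
    unfolding inj_on_def by blast
  then show ?thesis
    using m that by metis
qed

lemma nondifferentiable_point_near:
  assumes bound: "\<And>z. \<bar>f z\<bar> \<le> M"
    and grid: "\<And>\<tau>. \<tau> > 0 \<Longrightarrow> \<exists>t\<in>{0<..\<tau>}. \<exists>G. finite G \<and> G \<noteq> {} \<and> G \<subseteq> {0..1} \<and>
                  (\<forall>x\<in>{0..1}. Ht t f x = (MIN g\<in>G. qf f t x g))"
    and "y \<in> {0..1}" and "e > 0"
  shows "\<exists>g\<in>{0..1}. dist g y < e \<and> \<not> f differentiable (at g)"
proof -
  have "M \<ge> 0"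
    using bound[of 0] by linarith
  then have "(e / 2)\<^sup>2 / (4 * (M + 1)) > 0"
    using \<open>e > 0\<close> by simp
  then obtain t G where t: "0 < t" "t \<le> (e / 2)\<^sup>2 / (4 * (M + 1))"
    and G: "finite G" "G \<noteq> {}" "G \<subseteq> {0..1}"
    and Ht_grid: "\<And>x. x \<in> {0..1} \<Longrightarrow> Ht t f x = (MIN g\<in>G. qf f t x g)"
    using grid by (metis greaterThanAtMost_iff)
  define A where "A = {max 0 (y - e / 2) .. min 1 (y + e / 2)}"
  have "A \<subseteq> {0..1}" and "infinite A"
    using assms(3,4) by (auto simp: A_def intro!: infinite_Icc)
  then obtain x1 x2 g where x12: "x1 \<in> A" "x2 \<in> A" "x1 \<noteq> x2" "g \<in> G"
    and min1: "Ht t f x1 = qf f t x1 g" and min2: "Ht t f x2 = qf f t x2 g"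
    using common_grid_minimizer[OF G(1,2)] Ht_grid by (metis subsetD)
  have "- M \<le> f z" for z
    using bound[of z] by linarith
  then have "bdd_below (range f)"
    by (rule bdd_belowI2)
  then have min1': "\<And>z. qf f t x1 g \<le> qf f t x1 z" and min2': "\<And>z. qf f t x2 g \<le> qf f t x2 z"
    using Ht_le_qf[OF t(1)] min1 min2 by metis+
  have "\<bar>x1 - g\<bar> < e / 2"
    using qf_minimizer_close[OF t(1) _ t(2) bound min1'] \<open>e > 0\<close> by simp
  moreover have "\<bar>x1 - y\<bar> \<le> e / 2"
    using x12(1) unfolding A_def abs_le_iff by auto
  ultimately have "dist g y < e"
    unfolding dist_real_def abs_less_iff abs_le_iff by linarith
  moreover have "\<not> f differentiable (at g)"
    using not_differentiable_at_common_minimizer[OF t(1) x12(3) min1' min2'] .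
  ultimately show ?thesis
    using x12(4) G(3) by blast
qed

theorem theorem4p3:
  fixes r :: nat and f :: "real \<Rightarrow> real" and c :: real
  assumes "r \<ge> 2" and "f \<in> Cp" and "c > 0"
    and "\<And>n::nat. \<And>t x. t \<ge> 1 / (2 * c * real r ^ n) \<Longrightarrow> x \<in> {0..1} \<Longrightarrow>
           Ht t f x = (MIN k\<in>{0..r ^ n}. qf f t x (real k / real r ^ n))"
  shows "\<exists>D \<subseteq> {0..1}. {0..1} \<subseteq> closure D \<and> (\<forall>x\<in>D. \<not> f differentiable (at x))"
proof -
  obtain M where M: "\<And>z. \<bar>f z\<bar> \<le> M"
    using periodic_continuous_bounded assms(2) unfolding Cp_def by blast
  have grid: "\<exists>t\<in>{0<..\<tau>}. \<exists>G. finite G \<and> G \<noteq> {} \<and> G \<subseteq> {0..1} \<and>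
          (\<forall>x\<in>{0..1}. Ht t f x = (MIN g\<in>G. qf f t x g))" if "\<tau> > 0" for \<tau>
  proof -
    obtain n where n: "1 / (2 * c * \<tau>) < real r ^ n"
      using real_arch_pow[of "real r"] assms(1) by fastforce
    define t where "t = 1 / (2 * c * real r ^ n)"
    define G where "G = (\<lambda>k. real k / real r ^ n) ` {0..r ^ n}"
    have "t \<in> {0<..\<tau>}"
      unfolding t_def using n assms(1,3) that by (auto simp: field_simps)
    moreover have "finite G" "G \<noteq> {}" "G \<subseteq> {0..1}"
      unfolding G_def using assms(1) by (auto simp: divide_le_eq_1 simp flip: of_nat_power)
    moreover have "\<forall>x\<in>{0..1}. Ht t f x = (MIN g\<in>G. qf f t x g)"
      using assms(4)[where n = n and t = t] unfolding t_def G_def image_image by simp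
    ultimately show ?thesis
      by blast
  qed
  define D where "D = {g\<in>{0..1}. \<not> f differentiable (at g)}"
  have "y \<in> closure D" if "y \<in> {0..1}" for y
    using nondifferentiable_point_near[OF M grid that] unfolding closure_approachable D_def by blast
  then show ?thesis
    by (intro exI[of _ D]) (auto simp: D_def)
qed

end
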